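(* Assume $c\ge0$ and that for every bounded interval $J\subset I$ there exist a positive $\varphi_J\in C^2(\mathbb R^d)$ with $\varphi_J(x)\to+\infty$ as $|x|\to\infty$ and a constant $M_J>0$ with $(\mathcal A(t)\varphi_J)(x)\le M_J$ for $(t,x)\in J\times\mathbb R^d$. Then for every bounded interval $J\subset I$ and every $\rho>0$, the function $(t,s,x)\mapsto(G(t,s)\varphi_J)(x)=\int_{\mathbb R^d}\varphi_J(y)\,g_{t,s}(x,dy)$ is finite and bounded on $\Lambda_J\times B(0,\rho)$.
   Context: Let $d\ge1$, $\alpha\in(0,1)$, $I\subseteq\mathbb R$ either $\mathbb R$ or a right half-line; $\Lambda_J=\{(t,s)\in J\times J:t\ge s\}$. For $t\in I$, $(\mathcal A(t)\psi)(x)=\sum_{i,j}q_{ij}(t,x)D_{ij}\psi(x)+\sum_ib_i(t,x)D_i\psi(x)-c(t,x)\psi(x)$, with: $q_{ij},b_i,c\in C^{\alpha/2,\alpha}_{\rm loc}(I\times\mathbb R^d)$; $\inf c>-\infty$; $Q=(q_{ij})$ symmetric with $\langle Q(t,x)\xi,\xi\rangle\ge\eta(t,x)|\xi|^2$, $\inf\eta>0$; for every bounded interval $J\subset I$ there are positive $\phi_J\in C^2(\mathbb R^d)$ with $\phi_J\to+\infty$ at infinity and $\lambda_J$ with $\mathcal A(t)\phi_J\le\lambda_J\phi_J$ on $J\times\mathbb R^d$. $G(t,s)$ is the evolution operator on $C_b(\mathbb R^d)$: $G(t,s)f=u_f(t,\cdot)$, $u_f$ the unique solution (bounded on strips, in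 $C([s,\infty)\times\mathbb R^d)\cap C^{1+\alpha/2,2+\alpha}_{\rm loc}((s,\infty)\times\mathbb R^d)$) of $D_tu=\mathcal A(t)u$, $u(s)=f$. Its Green function $g$ is positive with $(G(t,s)f)(x)=\int g(t,s,x,y)f(y)dy$; $g_{t,s}(x,dy)=g(t,s,x,y)dy$ for $t>s$, $g_{t,t}(x,dy)=\delta_x$; this defines $G(t,s)$ on nonnegative Borel functions (values in $[0,+\infty]$). *)

theory Defs
  imports "HOL-Analysis.Analysis"
begin

text \<open>Points of R^d are vectors of type real^'n (d = CARD('n)).
  e_i is axis i 1. Partial derivative D_i psi (x) = d/dh psi(x + h e_i) at h = 0.\<close>

definition pd :: "'n::finite \<Rightarrow> (real^'n \<Rightarrow> real) \<Rightarrow> real^'n \<Rightarrow> real" where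
  "pd i \<psi> x = deriv (\<lambda>h. \<psi> (x + h *\<^sub>R axis i 1)) 0"

definition C2 :: "(real^'n::finite \<Rightarrow> real) \<Rightarrow> bool" where
  "C2 \<psi> \<longleftrightarrow> continuous_on UNIV \<psi>
     \<and> (\<forall>i x. ((\<lambda>h. \<psi> (x + h *\<^sub>R axis i 1)) has_real_derivative pd i \<psi> x) (at 0))
     \<and> (\<forall>i. continuous_on UNIV (pd i \<psi>))
     \<and> (\<forall>i j x. ((\<lambda>h. pd i \<psi> (x + h *\<^sub>R axis j 1)) has_real_derivative pd j (pd i \<psi>) x) (at 0))
     \<and> (\<forall>i j. continuous_on UNIV (pd j (pd i \<psi>)))"

definition Aop :: "(real \<Rightarrow> real^'n \<Rightarrow> 'n \<Rightarrow> 'n \<Rightarrow> real) \<Rightarrow> (real \<Rightarrow> real^'n \<Rightarrow> 'n \<Rightarrow> real)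
    \<Rightarrow> (real \<Rightarrow> real^'n \<Rightarrow> real) \<Rightarrow> real \<Rightarrow> (real^'n::finite \<Rightarrow> real) \<Rightarrow> real^'n \<Rightarrow> real" where
  "Aop q b c t \<psi> x = (\<Sum>i\<in>UNIV. \<Sum>j\<in>UNIV. q t x i j * pd j (pd i \<psi>) x)
       + (\<Sum>i\<in>UNIV. b t x i * pd i \<psi> x) - c t x * \<psi> x"

definition holder_loc :: "real \<Rightarrow> (real \<times> (real^'n::finite)) set \<Rightarrow> (real \<Rightarrow> real^'n \<Rightarrow> real) \<Rightarrow> bool" where
  "holder_loc \<alpha> S f \<longleftrightarrow> (\<forall>K. compact K \<and> K \<subseteq> S \<longrightarrow>
     (\<exists>C. \<forall>t x s y. (t, x) \<in> K \<and> (s, y) \<in> K \<longrightarrow>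
        \<bar>f t x - f s y\<bar> \<le> C * (\<bar>t - s\<bar> powr (\<alpha> / 2) + norm (x - y) powr \<alpha>)))"

text \<open>Classical solution of D_t u = A(t) u on (s,infinity) x R^d, u(s) = f, which is continuous on
  [s,infinity) x R^d, bounded on every strip [s,T] x R^d, and in C^{1+alpha/2,2+alpha}_loc((s,infinity) x R^d)
  (ut = D_t u, ux i = D_i u, uxx i j = D_j D_i u; ut and uxx locally Hoelder, ux continuous).\<close>
definition cauchy_sol :: "real \<Rightarrow> (real \<Rightarrow> real^'n \<Rightarrow> 'n \<Rightarrow> 'n \<Rightarrow> real) \<Rightarrow> (real \<Rightarrow> real^'n \<Rightarrow> 'n \<Rightarrow> real)
    \<Rightarrow> (real \<Rightarrow> real^'n \<Rightarrow> real) \<Rightarrow> real \<Rightarrow> (real^'n::finite \<Rightarrow> real) \<Rightarrow> (real \<Rightarrow> real^'n \<Rightarrow> real) \<Rightarrow> bool" where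
  "cauchy_sol \<alpha> q b c s f u \<longleftrightarrow>
     continuous_on ({s..} \<times> UNIV) (\<lambda>(t, x). u t x)
   \<and> (\<forall>T. bounded ((\<lambda>(t, x). u t x) ` ({s..T} \<times> UNIV)))
   \<and> (\<forall>x. u s x = f x)
   \<and> (\<exists>ut ux uxx.
        (\<forall>t x. t > s \<longrightarrow> ((\<lambda>\<tau>. u \<tau> x) has_real_derivative ut t x) (at t))
      \<and> (\<forall>t x i. t > s \<longrightarrow> ((\<lambda>h. u t (x + h *\<^sub>R axis i 1)) has_real_derivative ux t x i) (at 0))
      \<and> (\<forall>t x i j. t > s \<longrightarrow> ((\<lambda>h. ux t (x + h *\<^sub>R axis j 1) i) has_real_derivative uxx t x i j) (at 0))
      \<and> (\<forall>i. continuous_on ({s<..} \<times> UNIV) (\<lambda>(t, x). ux t x i))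
      \<and> holder_loc \<alpha> ({s<..} \<times> UNIV) ut
      \<and> (\<forall>i j. holder_loc \<alpha> ({s<..} \<times> UNIV) (\<lambda>t x. uxx t x i j))
      \<and> (\<forall>t x. t > s \<longrightarrow> ut t x = (\<Sum>i\<in>UNIV. \<Sum>j\<in>UNIV. q t x i j * uxx t x i j)
                                 + (\<Sum>i\<in>UNIV. b t x i * ux t x i) - c t x * u t x))"

definition bdd_interval :: "real set \<Rightarrow> bool" where
  "bdd_interval J \<longleftrightarrow> is_interval J \<and> bounded J"

text \<open>G(t,s) on nonnegative functions via the Green function: integral against g_{t,s}(x,dy),
  with g_{t,t}(x,dy) = Dirac at x.\<close>
definition Gnn :: "(real \<Rightarrow> real \<Rightarrow> real^'n \<Rightarrow> real^'n \<Rightarrow> real) \<Rightarrow> real \<Rightarrow> real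
    \<Rightarrow> (real^'n::finite \<Rightarrow> real) \<Rightarrow> real^'n \<Rightarrow> ennreal" where
  "Gnn g t s \<phi> x = (if t = s then ennreal (\<phi> x)
                     else \<integral>\<^sup>+ y. ennreal (g t s x y * \<phi> y) \<partial>lborel)"

end

theory Submission
  imports Defs
begin

(* Maximum principle with a Lyapunov penalty.  For bounded continuous data f \<le> \<phi>, the solution
   u = G(\<cdot>, s) f satisfies u(t) \<le> \<phi> + M (t - s): otherwise the function
   u - \<phi> - M (t - s) - \<epsilon> e^{k(t-s)} \<psi> attains a positive maximum on [s, t] \<times> R^d (\<psi> \<rightarrow> \<infinity>),
   necessarily at some t0 > s, where the first and second order conditions, c \<ge> 0, the
   ellipticity of Q (trace of Q times a negative semidefinite Hessian is \<le> 0) and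
   A \<phi> \<le> M, A \<psi> \<le> \<lambda> \<psi> < k \<psi> contradict the parabolic equation.  Applying this to the
   truncations min \<phi> n and letting n \<rightarrow> \<infinity> by monotone convergence gives
   G(t, s) \<phi> \<le> \<phi> + M (t - s), which is bounded on \<Lambda>_J \<times> B(0, \<rho>). *)

section \<open>Directional derivatives from continuous partial derivatives\<close>

lemma DERIV_along_line_shift:
  fixes F :: "'a::real_normed_vector \<Rightarrow> real"
  assumes "\<And>x. ((\<lambda>h. F (x + h *\<^sub>R v)) has_real_derivative DF x) (at 0)"
  shows "((\<lambda>h. F (y + h *\<^sub>R v)) has_real_derivative DF (y + h0 *\<^sub>R v)) (at h0)"
proof -
  have "((\<lambda>h. F ((y + h0 *\<^sub>R v) + h *\<^sub>R v)) has_real_derivative DF (y + h0 *\<^sub>R v)) (at 0)"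
    by (rule assms)
  moreover have "(\<lambda>h. F ((y + h0 *\<^sub>R v) + h *\<^sub>R v)) = (\<lambda>h. F (y + (h + h0) *\<^sub>R v))"
    by (simp add: algebra_simps scaleR_add_left)
  ultimately show ?thesis
    using DERIV_shift[where f="\<lambda>h. F (y + h *\<^sub>R v)" and x=0 and z=h0] by simp
qed

lemma mvt_along_line:
  fixes F :: "'a::real_normed_vector \<Rightarrow> real"
  assumes "\<And>x. ((\<lambda>h. F (x + h *\<^sub>R v)) has_real_derivative DF x) (at 0)"
  shows "\<exists>\<theta>. \<bar>\<theta>\<bar> \<le> \<bar>k\<bar> \<and> F (y + k *\<^sub>R v) - F y = k * DF (y + \<theta> *\<^sub>R v)"
proof -
  note D = DERIV_along_line_shift[of F v DF y, OF assms]
  consider "k = 0" | "0 < k" | "k < 0" by linarith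
  then show ?thesis
  proof cases
    case 1
    then show ?thesis by (auto intro!: exI[of _ 0])
  next
    case 2
    from MVT2[OF 2, of "\<lambda>h. F (y + h *\<^sub>R v)" "\<lambda>h. DF (y + h *\<^sub>R v)"] D obtain z
      where "0 < z" "z < k" "F (y + k *\<^sub>R v) - F (y + 0 *\<^sub>R v) = (k - 0) * DF (y + z *\<^sub>R v)"
      by blast
    then show ?thesis by (auto intro!: exI[of _ z])
  next
    case 3
    from MVT2[OF 3, of "\<lambda>h. F (y + h *\<^sub>R v)" "\<lambda>h. DF (y + h *\<^sub>R v)"] D obtain z
      where "k < z" "z < 0" "F (y + 0 *\<^sub>R v) - F (y + k *\<^sub>R v) = (0 - k) * DF (y + z *\<^sub>R v)"
      by blast
    then show ?thesis by (auto intro!: exI[of _ z] simp: algebra_simps)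
  qed
qed

lemma increment_as_sum_of_partials:
  fixes F :: "real^'n::finite \<Rightarrow> real"
  assumes partial: "\<And>i x. ((\<lambda>h. F (x + h *\<^sub>R axis i 1)) has_real_derivative DF i x) (at 0)"
    and "finite A"
  shows "\<exists>z. (\<forall>i\<in>A. norm (z i - y) \<le> \<bar>k\<bar> * (\<Sum>j\<in>A. \<bar>v$j\<bar>))
      \<and> F (y + k *\<^sub>R (\<Sum>i\<in>A. v$i *\<^sub>R axis i 1)) - F y = k * (\<Sum>i\<in>A. v$i * DF i (z i))"
  using \<open>finite A\<close>
proof (induction A rule: finite_induct)
  case empty
  then show ?case by simp
next
  case (insert a A)
  from insert.IH obtain z where z_near: "\<forall>i\<in>A. norm (z i - y) \<le> \<bar>k\<bar> * (\<Sum>j\<in>A. \<bar>v$j\<bar>)"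
    and z_incr: "F (y + k *\<^sub>R (\<Sum>i\<in>A. v$i *\<^sub>R axis i 1)) - F y = k * (\<Sum>i\<in>A. v$i * DF i (z i))"
    by blast
  define y' where "y' = y + k *\<^sub>R (\<Sum>i\<in>A. v$i *\<^sub>R axis i 1)"
  obtain \<theta> where \<theta>: "\<bar>\<theta>\<bar> \<le> \<bar>k * v$a\<bar>"
    and \<theta>_incr: "F (y' + (k * v$a) *\<^sub>R axis a 1) - F y' = (k * v$a) * DF a (y' + \<theta> *\<^sub>R axis a 1)"
    using mvt_along_line[of F "axis a 1" "DF a", OF partial] by blast
  define z' where "z' = z(a := y' + \<theta> *\<^sub>R axis a 1)"
  have "norm (\<Sum>i\<in>A. v$i *\<^sub>R axis i (1::real)) \<le> (\<Sum>j\<in>A. \<bar>v$j\<bar>)"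
    by (rule order_trans[OF norm_sum]) (simp add: norm_axis_1)
  then have "norm (z' a - y) \<le> \<bar>k\<bar> * (\<Sum>j\<in>A. \<bar>v$j\<bar>) + \<bar>\<theta>\<bar>"
    unfolding z'_def y'_def
    by (auto intro!: order_trans[OF norm_triangle_ineq] mult_left_mono simp: norm_axis_1)
  also have "\<dots> \<le> \<bar>k\<bar> * (\<Sum>j\<in>insert a A. \<bar>v$j\<bar>)"
    using \<theta> insert.hyps by (simp add: algebra_simps abs_mult)
  finally have "norm (z' a - y) \<le> \<bar>k\<bar> * (\<Sum>j\<in>insert a A. \<bar>v$j\<bar>)" .
  moreover have "norm (z' i - y) \<le> \<bar>k\<bar> * (\<Sum>j\<in>insert a A. \<bar>v$j\<bar>)" if "i \<in> A" for i
  proof -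
    have "\<bar>k\<bar> * (\<Sum>j\<in>A. \<bar>v$j\<bar>) \<le> \<bar>k\<bar> * (\<Sum>j\<in>insert a A. \<bar>v$j\<bar>)"
      using insert.hyps by (simp add: mult_left_mono)
    then show ?thesis
      using z_near that insert.hyps by (auto simp: z'_def)
  qed
  moreover have "(\<Sum>i\<in>A. v$i * DF i (z' i)) = (\<Sum>i\<in>A. v$i * DF i (z i))"
    using insert.hyps by (intro sum.cong) (auto simp: z'_def)
  moreover have "y + k *\<^sub>R (\<Sum>i\<in>insert a A. v$i *\<^sub>R axis i 1) = y' + (k * v$a) *\<^sub>R axis a 1"
    using insert.hyps by (simp add: y'_def algebra_simps)
  ultimately show ?case
    using \<theta>_incr z_incr insert.hyps
    by (intro exI[of _ z']) (auto simp: y'_def z'_def algebra_simps)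
qed

lemma DERIV_along_line:
  fixes F :: "real^'n::finite \<Rightarrow> real"
  assumes partial: "\<And>i x. ((\<lambda>h. F (x + h *\<^sub>R axis i 1)) has_real_derivative DF i x) (at 0)"
    and partial_cont: "\<And>i. continuous_on UNIV (DF i)"
  shows "((\<lambda>h. F (x + h *\<^sub>R v)) has_real_derivative (\<Sum>i\<in>UNIV. v$i * DF i (x + h0 *\<^sub>R v))) (at h0)"
proof (rule DERIV_along_line_shift)
  fix x
  have v: "(\<Sum>i\<in>UNIV. v$i *\<^sub>R axis i (1::real)) = v"
    using basis_expansion[of v] by (simp add: scalar_mult_eq_scaleR)
  define B where "B = (\<Sum>j\<in>UNIV. \<bar>v$j\<bar>)"
  have "\<forall>k. \<exists>z. (\<forall>i. norm (z i - x) \<le> \<bar>k\<bar> * B)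
      \<and> F (x + k *\<^sub>R v) - F x = k * (\<Sum>i\<in>UNIV. v$i * DF i (z i))"
    using increment_as_sum_of_partials[OF partial, of UNIV x _ v] unfolding v B_def by simp
  then obtain Z where Z_near: "\<And>k i. norm (Z k i - x) \<le> \<bar>k\<bar> * B"
    and Z_incr: "\<And>k. F (x + k *\<^sub>R v) - F x = k * (\<Sum>i\<in>UNIV. v$i * DF i (Z k i))"
    by metis
  have Z_lim: "((\<lambda>k. Z k i) \<longlongrightarrow> x) (at 0)" for i
  proof -
    have "((\<lambda>k::real. \<bar>k\<bar> * B) \<longlongrightarrow> \<bar>0\<bar> * B) (at 0)"
      by (intro tendsto_intros)
    then have "((\<lambda>k::real. \<bar>k\<bar> * B) \<longlongrightarrow> 0) (at 0)"
      by simp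
    moreover have "\<forall>\<^sub>F k in at 0. norm (Z k i - x) \<le> \<bar>k\<bar> * B"
      by (simp add: Z_near)
    ultimately have "((\<lambda>k. Z k i - x) \<longlongrightarrow> 0) (at 0)"
      by (rule Lim_null_comparison[rotated])
    then show ?thesis by (simp add: LIM_zero_iff)
  qed
  have "((\<lambda>k. \<Sum>i\<in>UNIV. v$i * DF i (Z k i)) \<longlongrightarrow> (\<Sum>i\<in>UNIV. v$i * DF i x)) (at 0)"
  proof (intro tendsto_sum tendsto_mult tendsto_const)
    fix i
    have "isCont (DF i) x"
      using partial_cont[of i] by (simp add: continuous_on_eq_continuous_at)
    then show "((\<lambda>k. DF i (Z k i)) \<longlongrightarrow> DF i x) (at 0)"
      using isCont_tendsto_compose Z_lim by blast
  qed
  moreover have "\<forall>\<^sub>F k in at 0. (\<Sum>i\<in>UNIV. v$i * DF i (Z k i)) = (F (x + k *\<^sub>R v) - F (x + 0 *\<^sub>R v)) / (k - 0)"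
    using Z_incr by (auto simp: eventually_at_filter)
  ultimately have "((\<lambda>k. (F (x + k *\<^sub>R v) - F (x + 0 *\<^sub>R v)) / (k - 0)) \<longlongrightarrow> (\<Sum>i\<in>UNIV. v$i * DF i x)) (at 0)"
    by (rule Lim_transform_eventually)
  then show "((\<lambda>h. F (x + h *\<^sub>R v)) has_real_derivative (\<Sum>i\<in>UNIV. v$i * DF i x)) (at 0)"
    by (simp only: has_field_derivative_iff)
qed

section \<open>Necessary conditions at a maximum\<close>

lemma global_max_necessary_conditions:
  fixes W :: "real^'n::finite \<Rightarrow> real"
  assumes dW: "\<And>i x. ((\<lambda>h. W (x + h *\<^sub>R axis i 1)) has_real_derivative DW i x) (at 0)"
    and DW_cont: "\<And>i. continuous_on UNIV (DW i)"
    and dDW: "\<And>i j x. ((\<lambda>h. DW i (x + h *\<^sub>R axis j 1)) has_real_derivative DDW i j x) (at 0)"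
    and DDW_cont: "\<And>i j. continuous_on UNIV (DDW i j)"
    and max: "\<And>x. W x \<le> W x0"
  shows "DW i x0 = 0" and "(\<Sum>i\<in>UNIV. \<xi>$i * (\<Sum>j\<in>UNIV. \<xi>$j * DDW i j x0)) \<le> 0"
proof -
  show "DW i x0 = 0"
    using dW by (rule DERIV_local_max[where d=1]) (auto intro: max)
next
  define g' where "g' h = (\<Sum>i\<in>UNIV. \<xi>$i * DW i (x0 + h *\<^sub>R \<xi>))" for h
  define g'' where "g'' = (\<Sum>i\<in>UNIV. \<xi>$i * (\<Sum>j\<in>UNIV. \<xi>$j * DDW i j x0))"
  have dg: "((\<lambda>h. W (x0 + h *\<^sub>R \<xi>)) has_real_derivative g' h) (at h)" for h
    unfolding g'_def by (rule DERIV_along_line[OF dW DW_cont])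
  have "((\<lambda>h. DW i (x0 + h *\<^sub>R \<xi>)) has_real_derivative (\<Sum>j\<in>UNIV. \<xi>$j * DDW i j x0)) (at 0)" for i
    using DERIV_along_line[OF dDW DDW_cont, of i x0 \<xi> 0] by simp
  then have dg': "(g' has_real_derivative g'') (at 0)"
    unfolding g'_def g''_def by (intro DERIV_sum DERIV_cmult)
  have g'0: "g' 0 = 0"
    using dg[of 0] by (rule DERIV_local_max[where d=1]) (auto intro: max)
  show "g'' \<le> 0"
  proof (rule ccontr)
    assume "\<not> g'' \<le> 0"
    then have "0 < g''" by simp
    from DERIV_pos_inc_right[OF dg' this] obtain d
      where "d > 0" and g'_pos: "\<And>h. 0 < h \<Longrightarrow> h < d \<Longrightarrow> g' 0 < g' (0 + h)"
      by blast
    then have "0 < d / 2" by simp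
    from MVT2[OF this, of "\<lambda>h. W (x0 + h *\<^sub>R \<xi>)" g'] dg obtain z
      where "0 < z" "z < d / 2" "W (x0 + (d / 2) *\<^sub>R \<xi>) - W (x0 + 0 *\<^sub>R \<xi>) = (d / 2 - 0) * g' z"
      by blast
    moreover have "0 < (d / 2 - 0) * g' z"
      using \<open>d > 0\<close> g'_pos[of z] g'0 calculation by simp
    ultimately show False
      using max[of "x0 + (d / 2) *\<^sub>R \<xi>"] by simp
  qed
qed

lemma DERIV_nonneg_at_left_max:
  fixes f :: "real \<Rightarrow> real"
  assumes "(f has_real_derivative D) (at t0)" and "a < t0"
    and max: "\<And>t. a \<le> t \<Longrightarrow> t \<le> t0 \<Longrightarrow> f t \<le> f t0"
  shows "0 \<le> D"
proof (rule ccontr)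
  assume "\<not> 0 \<le> D"
  then have "D < 0" by simp
  from DERIV_neg_dec_left[OF assms(1) this] obtain d
    where "d > 0" and dec: "\<And>h. 0 < h \<Longrightarrow> h < d \<Longrightarrow> f t0 < f (t0 - h)"
    by blast
  define h where "h = min (d / 2) (t0 - a)"
  have "0 < h" "h < d" "h \<le> t0 - a"
    using \<open>d > 0\<close> \<open>a < t0\<close> by (auto simp: h_def)
  then show False
    using dec[of h] max[of "t0 - h"] by simp
qed

section \<open>Positive semidefinite quadratic forms\<close>

definition psd_on :: "'a set \<Rightarrow> ('a \<Rightarrow> 'a \<Rightarrow> real) \<Rightarrow> bool" where
  "psd_on A S \<longleftrightarrow> (\<forall>\<xi>. 0 \<le> (\<Sum>i\<in>A. \<Sum>j\<in>A. S i j * \<xi> i * \<xi> j))"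

lemma double_sum_insert:
  fixes X :: "'a \<Rightarrow> 'a \<Rightarrow> real"
  assumes "a \<notin> A" "finite A"
  shows "(\<Sum>i\<in>insert a A. \<Sum>j\<in>insert a A. X i j)
       = X a a + (\<Sum>j\<in>A. X a j) + (\<Sum>i\<in>A. X i a) + (\<Sum>i\<in>A. \<Sum>j\<in>A. X i j)"
  using assms by (simp add: sum.distrib)

lemma psd_on_insertD:
  assumes "psd_on (insert a A) S" "a \<notin> A" "finite A"
  shows "psd_on A S"
  unfolding psd_on_def
proof
  fix \<xi> :: "'a \<Rightarrow> real"
  have "0 \<le> (\<Sum>i\<in>insert a A. \<Sum>j\<in>insert a A. S i j * (\<xi>(a := 0)) i * (\<xi>(a := 0)) j)"
    using assms(1) by (simp add: psd_on_def)
  also have "\<dots> = (\<Sum>i\<in>A. \<Sum>j\<in>A. S i j * \<xi> i * \<xi> j)"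
    unfolding double_sum_insert[OF assms(2,3)] using assms(2) by (auto intro!: sum.cong)
  finally show "0 \<le> (\<Sum>i\<in>A. \<Sum>j\<in>A. S i j * \<xi> i * \<xi> j)" .
qed

lemma psd_on_insert_quadratic:
  assumes "psd_on (insert a A) q" "a \<notin> A" "finite A" "\<And>i j. q i j = q j i"
  shows "0 \<le> q a a * t\<^sup>2 + 2 * t * (\<Sum>j\<in>A. q a j * \<eta> j) + (\<Sum>i\<in>A. \<Sum>j\<in>A. q i j * \<eta> i * \<eta> j)"
proof -
  let ?\<xi> = "\<eta>(a := t)"
  have "(\<Sum>j\<in>A. q a j * ?\<xi> a * ?\<xi> j) = t * (\<Sum>j\<in>A. q a j * \<eta> j)"
    and "(\<Sum>i\<in>A. q i a * ?\<xi> i * ?\<xi> a) = t * (\<Sum>j\<in>A. q a j * \<eta> j)"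
    and "(\<Sum>i\<in>A. \<Sum>j\<in>A. q i j * ?\<xi> i * ?\<xi> j) = (\<Sum>i\<in>A. \<Sum>j\<in>A. q i j * \<eta> i * \<eta> j)"
    using assms(2,4) by (auto simp: sum_distrib_left intro!: sum.cong)
  moreover have "0 \<le> (\<Sum>i\<in>insert a A. \<Sum>j\<in>insert a A. q i j * ?\<xi> i * ?\<xi> j)"
    using assms(1) by (simp add: psd_on_def)
  ultimately show ?thesis
    unfolding double_sum_insert[OF assms(2,3)] by (simp add: power2_eq_square)
qed

lemma psd_on_diag_zero_row:
  assumes "psd_on (insert a A) q" "a \<notin> A" "finite A" "\<And>i j. q i j = q j i"
    and "q a a = 0" "j \<in> A"
  shows "q a j = 0"
proof -
  have "(\<Sum>k\<in>A. q a k * \<eta> k) = 0" for \<eta>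
  proof (rule ccontr)
    define L where "L = (\<Sum>k\<in>A. q a k * \<eta> k)"
    define R where "R = (\<Sum>i\<in>A. \<Sum>k\<in>A. q i k * \<eta> i * \<eta> k)"
    assume "(\<Sum>k\<in>A. q a k * \<eta> k) \<noteq> 0"
    then have "L \<noteq> 0" by (simp add: L_def)
    have "0 \<le> q a a * (-(R + 1) / (2 * L))\<^sup>2 + 2 * (-(R + 1) / (2 * L)) * L + R"
      using psd_on_insert_quadratic[OF assms(1-4), where t="-(R + 1) / (2 * L)" and \<eta>=\<eta>]
      by (simp add: L_def R_def)
    also have "\<dots> = -1"
      using \<open>q a a = 0\<close> \<open>L \<noteq> 0\<close> by (simp add: field_simps)
    finally show False by simp
  qed
  from this[of "\<lambda>k. if k = j then 1 else 0"] show ?thesis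
    using assms(3,6) by (simp add: if_distrib cong: if_cong)
qed

(* For q a a = 0 the division is by zero and the complement below is q itself. *)
lemma psd_on_schur_complement:
  assumes "psd_on (insert a A) q" "a \<notin> A" "finite A" "\<And>i j. q i j = q j i"
  shows "psd_on A (\<lambda>i j. q i j - q a i * q a j / q a a)"
  unfolding psd_on_def
proof
  fix \<eta> :: "'a \<Rightarrow> real"
  define L where "L = (\<Sum>j\<in>A. q a j * \<eta> j)"
  define R where "R = (\<Sum>i\<in>A. \<Sum>j\<in>A. q i j * \<eta> i * \<eta> j)"
  have "L\<^sup>2 / q a a = (\<Sum>i\<in>A. \<Sum>j\<in>A. q a i * q a j / q a a * \<eta> i * \<eta> j)"
    by (simp add: L_def power2_eq_square sum_product sum_divide_distrib algebra_simps)
  then have form: "R - L\<^sup>2 / q a a = (\<Sum>i\<in>A. \<Sum>j\<in>A. (q i j - q a i * q a j / q a a) * \<eta> i * \<eta> j)"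
    by (simp add: R_def algebra_simps sum_subtractf[symmetric])
  have "0 \<le> R - L\<^sup>2 / q a a"
  proof (cases "q a a = 0")
    case True
    then show ?thesis
      using psd_on_insertD[OF assms(1-3)] by (simp add: psd_on_def R_def)
  next
    case False
    have "0 \<le> q a a * (- L / q a a)\<^sup>2 + 2 * (- L / q a a) * L + R"
      using psd_on_insert_quadratic[OF assms, where t="- L / q a a" and \<eta>=\<eta>]
      by (simp add: L_def R_def)
    also have "\<dots> = R - L\<^sup>2 / q a a"
      using False by (simp add: field_simps power2_eq_square)
    finally show ?thesis .
  qed
  then show "0 \<le> (\<Sum>i\<in>A. \<Sum>j\<in>A. (q i j - q a i * q a j / q a a) * \<eta> i * \<eta> j)"
    by (simp only: form)
qed

(* Induction on A: q splits as its Schur complement, which vanishes on row a, plus the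
   rank-one form q_a q_a^T / q a a, and the latter pairs with S to S's quadratic form at q_a. *)
lemma psd_trace_nonneg:
  assumes "finite A" "psd_on A q" "psd_on A S" "\<And>i j. q i j = q j i"
  shows "0 \<le> (\<Sum>i\<in>A. \<Sum>j\<in>A. q i j * S i j)"
  using assms
proof (induction A arbitrary: q rule: finite_induct)
  case empty
  then show ?case by simp
next
  case (insert a A)
  define q' where "q' i j = q i j - q a i * q a j / q a a" for i j
  have q'_sym: "q' i j = q' j i" for i j
    using insert.prems(3) by (simp add: q'_def mult.commute)
  have "q a a \<ge> 0"
    using psd_on_insert_quadratic[OF insert.prems(1) insert.hyps(2,1) insert.prems(3), of 1 "\<lambda>_. 0"]
    by simp
  have q'_row: "q' a j = 0" "q' j a = 0" if "j \<in> A" for j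
  proof -
    have "q a j = 0" if "q a a = 0"
      using psd_on_diag_zero_row[OF insert.prems(1) insert.hyps(2,1) insert.prems(3) that \<open>j \<in> A\<close>] .
    then show "q' a j = 0" by (cases "q a a = 0") (simp_all add: q'_def)
    then show "q' j a = 0" by (simp add: q'_sym)
  qed
  have "0 \<le> (\<Sum>i\<in>A. \<Sum>j\<in>A. q' i j * S i j)"
    using insert.IH psd_on_schur_complement[OF insert.prems(1) insert.hyps(2,1) insert.prems(3)]
      psd_on_insertD[OF insert.prems(2) insert.hyps(2,1)] q'_sym
    unfolding q'_def by blast
  moreover have "0 \<le> (\<Sum>i\<in>insert a A. \<Sum>j\<in>insert a A. S i j * q a i * q a j)"
    using insert.prems(2) by (simp add: psd_on_def)
  moreover have "(\<Sum>i\<in>insert a A. \<Sum>j\<in>insert a A. q i j * S i j)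
      = (\<Sum>i\<in>insert a A. \<Sum>j\<in>insert a A. q' i j * S i j)
        + (\<Sum>i\<in>insert a A. \<Sum>j\<in>insert a A. S i j * q a i * q a j) / q a a"
    by (simp add: q'_def sum_divide_distrib sum.distrib[symmetric] algebra_simps diff_divide_distrib)
  moreover have "(\<Sum>i\<in>insert a A. \<Sum>j\<in>insert a A. q' i j * S i j) = (\<Sum>i\<in>A. \<Sum>j\<in>A. q' i j * S i j)"
    unfolding double_sum_insert[OF insert.hyps(2,1)] using q'_row by (simp add: q'_def)
  ultimately show ?case
    using \<open>q a a \<ge> 0\<close> by simp
qed

lemma psd_on_UNIV_vec:
  fixes S :: "'n::finite \<Rightarrow> 'n \<Rightarrow> real"
  shows "psd_on UNIV S \<longleftrightarrow> (\<forall>\<xi>::real^'n. 0 \<le> (\<Sum>i\<in>UNIV. \<Sum>j\<in>UNIV. S i j * \<xi>$i * \<xi>$j))"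
  unfolding psd_on_def
proof safe
  fix \<xi> :: "real^'n"
  assume "\<forall>\<xi>. 0 \<le> (\<Sum>i\<in>UNIV. \<Sum>j\<in>UNIV. S i j * \<xi> i * \<xi> j)"
  then show "0 \<le> (\<Sum>i\<in>UNIV. \<Sum>j\<in>UNIV. S i j * \<xi>$i * \<xi>$j)"
    by (rule allE[of _ "\<lambda>i. \<xi>$i"])
next
  fix \<xi> :: "'n \<Rightarrow> real"
  assume "\<forall>\<xi>::real^'n. 0 \<le> (\<Sum>i\<in>UNIV. \<Sum>j\<in>UNIV. S i j * \<xi>$i * \<xi>$j)"
  then show "0 \<le> (\<Sum>i\<in>UNIV. \<Sum>j\<in>UNIV. S i j * \<xi> i * \<xi> j)"
    by (auto dest: spec[of _ "\<chi> i. \<xi> i"])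
qed

lemma psd_on_UNIV_of_elliptic:
  fixes S :: "'n::finite \<Rightarrow> 'n \<Rightarrow> real"
  assumes "0 \<le> \<eta>" and "\<And>\<xi>::real^'n. \<eta> * (norm \<xi>)\<^sup>2 \<le> (\<Sum>i\<in>UNIV. \<Sum>j\<in>UNIV. S i j * \<xi>$i * \<xi>$j)"
  shows "psd_on UNIV S"
  unfolding psd_on_UNIV_vec using assms by (meson order_trans zero_le_power2 mult_nonneg_nonneg)

section \<open>The comparison principle\<close>

lemma C2D:
  assumes "C2 \<psi>"
  shows "continuous_on UNIV \<psi>"
    and "((\<lambda>h. \<psi> (x + h *\<^sub>R axis i 1)) has_real_derivative pd i \<psi> x) (at 0)"
    and "continuous_on UNIV (pd i \<psi>)"
    and "((\<lambda>h. pd i \<psi> (x + h *\<^sub>R axis j 1)) has_real_derivative pd j (pd i \<psi>) x) (at 0)"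
    and "continuous_on UNIV (pd j (pd i \<psi>))"
  using assms unfolding C2_def by blast+

lemma holder_loc_continuous_on_slice:
  fixes f :: "real \<Rightarrow> real^'n::finite \<Rightarrow> real"
  assumes holder: "holder_loc \<alpha> ({s<..} \<times> UNIV) f" and "0 < \<alpha>" and "s < t"
  shows "continuous_on UNIV (f t)"
proof (rule continuous_at_imp_continuous_on, intro ballI)
  fix x :: "real^'n"
  have K: "compact ({t} \<times> cball x 1)" by (intro compact_Times) auto
  have "{t} \<times> cball x 1 \<subseteq> {s<..} \<times> UNIV" using \<open>s < t\<close> by auto
  from holder[unfolded holder_loc_def, rule_format, OF conjI[OF K this]]
  obtain C where C0: "\<forall>t1 y1 t2 y2. (t1, y1) \<in> {t} \<times> cball x 1 \<and> (t2, y2) \<in> {t} \<times> cball x 1 \<longrightarrow>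
      \<bar>f t1 y1 - f t2 y2\<bar> \<le> C * (\<bar>t1 - t2\<bar> powr (\<alpha> / 2) + norm (y1 - y2) powr \<alpha>)"
    by blast
  have C: "\<bar>f t y - f t x\<bar> \<le> C * norm (y - x) powr \<alpha>" if "y \<in> cball x 1" for y
    using C0[rule_format, of t y t x] that by simp
  have "((\<lambda>y. norm (y - x) powr \<alpha>) \<longlongrightarrow> 0) (at x)"
    by (rule tendsto_zero_powrI) (auto intro!: tendsto_eq_intros \<open>0 < \<alpha>\<close> simp: LIM_zero_iff)
  then have "((\<lambda>y. C * norm (y - x) powr \<alpha>) \<longlongrightarrow> 0) (at x)"
    using tendsto_mult_right_zero by blast
  moreover have "\<forall>\<^sub>F y in at x. norm (f t y - f t x) \<le> C * norm (y - x) powr \<alpha>"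
    using eventually_at_ball[of 1 x UNIV] by (rule eventually_mono) (auto intro: C)
  ultimately have "((\<lambda>y. f t y - f t x) \<longlongrightarrow> 0) (at x)"
    by (rule Lim_null_comparison[rotated])
  then show "isCont (f t) x"
    by (simp add: isCont_def LIM_zero_iff)
qed

lemma cauchy_solE:
  assumes "cauchy_sol \<alpha> q b c s f u" and "0 < \<alpha>"
  obtains ut ux uxx where
    "continuous_on ({s..} \<times> UNIV) (\<lambda>(t, x). u t x)"
    "\<And>T. bounded ((\<lambda>(t, x). u t x) ` ({s..T} \<times> UNIV))"
    "\<And>x. u s x = f x"
    "\<And>t x. s < t \<Longrightarrow> ((\<lambda>\<tau>. u \<tau> x) has_real_derivative ut t x) (at t)"
    "\<And>t x i. s < t \<Longrightarrow> ((\<lambda>h. u t (x + h *\<^sub>R axis i 1)) has_real_derivative ux t x i) (at 0)"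
    "\<And>t x i j. s < t \<Longrightarrow> ((\<lambda>h. ux t (x + h *\<^sub>R axis j 1) i) has_real_derivative uxx t x i j) (at 0)"
    "\<And>t i. s < t \<Longrightarrow> continuous_on UNIV (\<lambda>x. ux t x i)"
    "\<And>t i j. s < t \<Longrightarrow> continuous_on UNIV (\<lambda>x. uxx t x i j)"
    "\<And>t x. s < t \<Longrightarrow> ut t x = (\<Sum>i\<in>UNIV. \<Sum>j\<in>UNIV. q t x i j * uxx t x i j)
                                 + (\<Sum>i\<in>UNIV. b t x i * ux t x i) - c t x * u t x"
proof -
  from assms(1) obtain ut ux uxx where
      u: "continuous_on ({s..} \<times> UNIV) (\<lambda>(t, x). u t x)"
      "\<And>T. bounded ((\<lambda>(t, x). u t x) ` ({s..T} \<times> UNIV))"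
      "\<And>x. u s x = f x"
      "\<And>t x. s < t \<Longrightarrow> ((\<lambda>\<tau>. u \<tau> x) has_real_derivative ut t x) (at t)"
      "\<And>t x i. s < t \<Longrightarrow> ((\<lambda>h. u t (x + h *\<^sub>R axis i 1)) has_real_derivative ux t x i) (at 0)"
      "\<And>t x i j. s < t \<Longrightarrow> ((\<lambda>h. ux t (x + h *\<^sub>R axis j 1) i) has_real_derivative uxx t x i j) (at 0)"
      and ux_cont: "\<And>i. continuous_on ({s<..} \<times> UNIV) (\<lambda>(t, x). ux t x i)"
      and uxx_holder: "\<And>i j. holder_loc \<alpha> ({s<..} \<times> UNIV) (\<lambda>t x. uxx t x i j)"
      and pde: "\<And>t x. s < t \<Longrightarrow> ut t x = (\<Sum>i\<in>UNIV. \<Sum>j\<in>UNIV. q t x i j * uxx t x i j)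
                                 + (\<Sum>i\<in>UNIV. b t x i * ux t x i) - c t x * u t x"
    unfolding cauchy_sol_def by blast
  have ux_slice: "continuous_on UNIV (\<lambda>x. ux t x i)" if "s < t" for t i
  proof -
    have "continuous_on UNIV (\<lambda>x. (\<lambda>(t, x). ux t x i) (t, x))"
      by (rule continuous_on_compose2[OF ux_cont[of i]]) (auto intro: continuous_intros simp: that)
    then show ?thesis by simp
  qed
  have uxx_slice: "continuous_on UNIV (\<lambda>x. uxx t x i j)" if "s < t" for t i j
    using holder_loc_continuous_on_slice[OF uxx_holder \<open>0 < \<alpha>\<close> that] by simp
  show ?thesis
    by (rule that[OF u ux_slice uxx_slice pde])
qed

lemma continuous_attains_sup_on_strip:
  fixes w :: "real \<times> 'a::{real_normed_vector, heine_borel} \<Rightarrow> real"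
  assumes "compact S" "continuous_on (S \<times> UNIV) w" "p1 \<in> S \<times> UNIV"
    and far: "\<And>t x. t \<in> S \<Longrightarrow> R \<le> norm x \<Longrightarrow> w (t, x) < w p1"
  shows "\<exists>p0\<in>S \<times> UNIV. \<forall>p\<in>S \<times> UNIV. w p \<le> w p0"
proof -
  define K where "K = S \<times> cball (0::'a) R"
  have "p1 \<in> K"
  proof (rule ccontr)
    assume "p1 \<notin> K"
    then have "R \<le> norm (snd p1)"
      using assms(3) by (auto simp: K_def)
    then show False
      using assms(3) far[of "fst p1" "snd p1"] by auto
  qed
  moreover have "compact K"
    unfolding K_def using assms(1) by (intro compact_Times) auto
  moreover have "continuous_on K w"
    using assms(2) by (rule continuous_on_subset) (auto simp: K_def)
  ultimately obtain p0 where "p0 \<in> K" and p0_max: "\<And>p. p \<in> K \<Longrightarrow> w p \<le> w p0"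
    using continuous_attains_sup[of K w] by blast
  have "w p \<le> w p0" if "p \<in> S \<times> UNIV" for p
  proof (cases "p \<in> K")
    case False
    then have "R \<le> norm (snd p)"
      using that by (auto simp: K_def)
    then have "w p < w p1"
      using that far[of "fst p" "snd p"] by auto
    then show ?thesis using p0_max[OF \<open>p1 \<in> K\<close>] by simp
  qed (rule p0_max)
  moreover have "p0 \<in> S \<times> UNIV"
    using \<open>p0 \<in> K\<close> by (auto simp: K_def)
  ultimately show ?thesis by blast
qed

lemma penalized_attains_sup:
  fixes v :: "real \<Rightarrow> 'a::{real_normed_vector, heine_borel} \<Rightarrow> real"
  assumes "s \<le> t" and v_cont: "continuous_on ({s..t} \<times> UNIV) (\<lambda>(\<tau>, y). v \<tau> y)"
    and v_bdd: "\<And>\<tau> y. \<tau> \<in> {s..t} \<Longrightarrow> v \<tau> y \<le> B"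
    and \<psi>_cont: "continuous_on UNIV \<psi>" and \<psi>_coercive: "filterlim \<psi> at_top at_infinity"
    and "0 < \<epsilon>" "0 \<le> k"
  obtains t0 y0 where "t0 \<in> {s..t}"
    "\<And>\<tau> y. \<tau> \<in> {s..t} \<Longrightarrow> v \<tau> y - \<epsilon> * exp (k * (\<tau> - s)) * \<psi> y
                           \<le> v t0 y0 - \<epsilon> * exp (k * (t0 - s)) * \<psi> y0"
proof -
  define w where "w p = v (fst p) (snd p) - \<epsilon> * exp (k * (fst p - s)) * \<psi> (snd p)" for p
  obtain R where R: "\<And>y. R \<le> norm y \<Longrightarrow> max 0 ((B - w (t, 0) + 1) / \<epsilon>) \<le> \<psi> y"
    using \<psi>_coercive unfolding filterlim_at_top eventually_at_infinity by blast
  have "w (\<tau>, y) < w (t, 0)" if "\<tau> \<in> {s..t}" "R \<le> norm y" for \<tau> y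
  proof -
    have "0 \<le> \<psi> y" and "B - w (t, 0) + 1 \<le> \<epsilon> * \<psi> y"
      using R[OF that(2)] \<open>0 < \<epsilon>\<close> by (auto simp: field_simps)
    moreover have "\<epsilon> * \<psi> y \<le> \<epsilon> * exp (k * (\<tau> - s)) * \<psi> y"
      using \<open>0 < \<epsilon>\<close> \<open>0 \<le> k\<close> \<open>0 \<le> \<psi> y\<close> that(1) by (simp add: mult.assoc mult_le_cancel_right1)
    ultimately show ?thesis
      using v_bdd[OF that(1), of y] by (simp add: w_def)
  qed
  moreover have "continuous_on ({s..t} \<times> UNIV) w"
    using v_cont unfolding w_def case_prod_beta
    by (intro continuous_intros continuous_on_compose2[OF \<psi>_cont]) auto
  ultimately have "\<exists>p0\<in>{s..t} \<times> UNIV. \<forall>p\<in>{s..t} \<times> UNIV. w p \<le> w p0"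
    using \<open>s \<le> t\<close> by (intro continuous_attains_sup_on_strip[of _ _ "(t, 0)" R]) auto
  then obtain p0 where "p0 \<in> {s..t} \<times> UNIV" "\<forall>p\<in>{s..t} \<times> UNIV. w p \<le> w p0"
    by blast
  then show ?thesis
    using that[of "fst p0" "snd p0"] by (auto simp: w_def)
qed

lemma Aop_le_at_spatial_max:
  fixes U :: "real^'n::finite \<Rightarrow> real"
  assumes dU: "\<And>i x. ((\<lambda>h. U (x + h *\<^sub>R axis i 1)) has_real_derivative DU i x) (at 0)"
    and DU_cont: "\<And>i. continuous_on UNIV (DU i)"
    and dDU: "\<And>i j x. ((\<lambda>h. DU i (x + h *\<^sub>R axis j 1)) has_real_derivative DDU i j x) (at 0)"
    and DDU_cont: "\<And>i j. continuous_on UNIV (DDU i j)"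
    and "C2 \<phi>" "C2 \<psi>"
    and max: "\<And>x. U x - \<phi> x - a * \<psi> x \<le> U x0 - \<phi> x0 - a * \<psi> x0"
    and q_psd: "psd_on UNIV (q t x0)" and q_sym: "\<And>i j. q t x0 i j = q t x0 j i"
    and c_sign: "0 \<le> c t x0 * (U x0 - \<phi> x0 - a * \<psi> x0)"
  shows "(\<Sum>i\<in>UNIV. \<Sum>j\<in>UNIV. q t x0 i j * DDU i j x0) + (\<Sum>i\<in>UNIV. b t x0 i * DU i x0) - c t x0 * U x0
      \<le> Aop q b c t \<phi> x0 + a * Aop q b c t \<psi> x0"
proof -
  define W where "W x = U x - \<phi> x - a * \<psi> x" for x
  define DW where "DW i x = DU i x - pd i \<phi> x - a * pd i \<psi> x" for i x
  define DDW where "DDW i j x = DDU i j x - pd j (pd i \<phi>) x - a * pd j (pd i \<psi>) x" for i j x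
  have dW: "((\<lambda>h. W (x + h *\<^sub>R axis i 1)) has_real_derivative DW i x) (at 0)" for i x
    unfolding W_def DW_def
    by (rule derivative_eq_intros dU C2D(2)[OF \<open>C2 \<phi>\<close>] C2D(2)[OF \<open>C2 \<psi>\<close>] | simp)+
  have dDW: "((\<lambda>h. DW i (x + h *\<^sub>R axis j 1)) has_real_derivative DDW i j x) (at 0)" for i j x
    unfolding DW_def DDW_def
    by (rule derivative_eq_intros dDU C2D(4)[OF \<open>C2 \<phi>\<close>] C2D(4)[OF \<open>C2 \<psi>\<close>] | simp)+
  have "continuous_on UNIV (DW i)" "continuous_on UNIV (DDW i j)" for i j
    unfolding DW_def DDW_def
    by (intro continuous_intros DU_cont DDU_cont C2D[OF \<open>C2 \<phi>\<close>] C2D[OF \<open>C2 \<psi>\<close>])+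
  note max_conditions = global_max_necessary_conditions[OF dW this(1) dDW this(2), of x0]
  have grad: "DU i x0 = pd i \<phi> x0 + a * pd i \<psi> x0" for i
    using max_conditions(1)[of i] max by (simp add: W_def DW_def)
  have "psd_on UNIV (\<lambda>i j. - DDW i j x0)"
    unfolding psd_on_UNIV_vec
  proof
    fix \<xi> :: "real^'n"
    have "(\<Sum>i\<in>UNIV. \<Sum>j\<in>UNIV. - DDW i j x0 * \<xi>$i * \<xi>$j)
        = - (\<Sum>i\<in>UNIV. \<xi>$i * (\<Sum>j\<in>UNIV. \<xi>$j * DDW i j x0))"
      by (simp add: sum_distrib_left sum_negf[symmetric] mult_ac)
    then show "0 \<le> (\<Sum>i\<in>UNIV. \<Sum>j\<in>UNIV. - DDW i j x0 * \<xi>$i * \<xi>$j)"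
      using max_conditions(2)[of \<xi>] max by (simp add: W_def)
  qed
  then have "0 \<le> (\<Sum>i\<in>UNIV. \<Sum>j\<in>UNIV. q t x0 i j * - DDW i j x0)"
    by (rule psd_trace_nonneg[OF finite_class.finite_UNIV q_psd _ q_sym])
  then have hess: "(\<Sum>i\<in>UNIV. \<Sum>j\<in>UNIV. q t x0 i j * DDW i j x0) \<le> 0"
    by (simp add: sum_negf)
  have "(\<Sum>i\<in>UNIV. \<Sum>j\<in>UNIV. q t x0 i j * DDU i j x0)
      = (\<Sum>i\<in>UNIV. \<Sum>j\<in>UNIV. q t x0 i j * DDW i j x0)
        + (\<Sum>i\<in>UNIV. \<Sum>j\<in>UNIV. q t x0 i j * pd j (pd i \<phi>) x0)
        + a * (\<Sum>i\<in>UNIV. \<Sum>j\<in>UNIV. q t x0 i j * pd j (pd i \<psi>) x0)"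
    by (simp add: DDW_def algebra_simps sum.distrib sum_subtractf sum_distrib_left)
  moreover have "(\<Sum>i\<in>UNIV. b t x0 i * DU i x0)
      = (\<Sum>i\<in>UNIV. b t x0 i * pd i \<phi> x0) + a * (\<Sum>i\<in>UNIV. b t x0 i * pd i \<psi> x0)"
    by (simp add: grad algebra_simps sum.distrib sum_distrib_left)
  ultimately show ?thesis
    using hess c_sign by (simp add: Aop_def algebra_simps)
qed

lemma penalized_positive_max:
  fixes u :: "real \<Rightarrow> 'a::{real_normed_vector, heine_borel} \<Rightarrow> real"
  assumes "s \<le> t" and u_cont: "continuous_on ({s..t} \<times> UNIV) (\<lambda>(\<tau>, y). u \<tau> y)"
    and u_bdd: "bounded ((\<lambda>(\<tau>, y). u \<tau> y) ` ({s..t} \<times> UNIV))"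
    and u_init: "\<And>y. u s y \<le> \<phi> y"
    and \<phi>_cont: "continuous_on UNIV \<phi>" and \<phi>_nonneg: "\<And>y. 0 \<le> \<phi> y" and "0 \<le> M"
    and \<psi>_cont: "continuous_on UNIV \<psi>" and \<psi>_pos: "\<And>y. 0 < \<psi> y"
    and \<psi>_coercive: "filterlim \<psi> at_top at_infinity" and "0 \<le> k"
    and exceeds: "\<phi> x + M * (t - s) < u t x"
  obtains \<epsilon> t0 x0 where "0 < \<epsilon>" "s < t0" "t0 \<le> t"
    "0 < u t0 x0 - \<phi> x0 - M * (t0 - s) - \<epsilon> * exp (k * (t0 - s)) * \<psi> x0"
    "\<And>\<tau> y. \<tau> \<in> {s..t} \<Longrightarrow> u \<tau> y - \<phi> y - M * (\<tau> - s) - \<epsilon> * exp (k * (\<tau> - s)) * \<psi> y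
        \<le> u t0 x0 - \<phi> x0 - M * (t0 - s) - \<epsilon> * exp (k * (t0 - s)) * \<psi> x0"
proof -
  define \<epsilon> where "\<epsilon> = (u t x - \<phi> x - M * (t - s)) / (2 * exp (k * (t - s)) * \<psi> x)"
  define w where "w \<tau> y = u \<tau> y - \<phi> y - M * (\<tau> - s) - \<epsilon> * exp (k * (\<tau> - s)) * \<psi> y" for \<tau> y
  have "0 < \<epsilon>"
    using exceeds \<psi>_pos[of x] by (simp add: \<epsilon>_def)
  from u_bdd obtain B where B: "\<And>\<tau> y. \<tau> \<in> {s..t} \<Longrightarrow> \<bar>u \<tau> y\<bar> \<le> B"
    unfolding bounded_iff by fastforce
  have v_bdd: "u \<tau> y - \<phi> y - M * (\<tau> - s) \<le> B" if "\<tau> \<in> {s..t}" for \<tau> y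
    using B[OF that, of y] \<phi>_nonneg[of y] \<open>0 \<le> M\<close> that by (smt (verit) atLeastAtMost_iff mult_nonneg_nonneg)
  have "continuous_on ({s..t} \<times> UNIV) (\<lambda>(\<tau>, y). u \<tau> y - \<phi> y - M * (\<tau> - s))"
    using u_cont unfolding case_prod_beta
    by (intro continuous_intros continuous_on_compose2[OF \<phi>_cont]) auto
  from penalized_attains_sup[OF \<open>s \<le> t\<close> this v_bdd \<psi>_cont \<psi>_coercive \<open>0 < \<epsilon>\<close> \<open>0 \<le> k\<close>]
  obtain t0 x0 where t0: "t0 \<in> {s..t}" and w_max: "\<And>\<tau> y. \<tau> \<in> {s..t} \<Longrightarrow> w \<tau> y \<le> w t0 x0"
    unfolding w_def by blast
  have "w t x = (u t x - \<phi> x - M * (t - s)) / 2"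
    using \<psi>_pos[of x] by (simp add: w_def \<epsilon>_def field_simps)
  then have "0 < w t0 x0"
    using w_max[of t x] \<open>s \<le> t\<close> exceeds by simp
  have "s \<noteq> t0"
  proof
    assume "s = t0"
    then show False
      using \<open>0 < w t0 x0\<close> u_init[of x0] \<open>0 < \<epsilon>\<close> \<psi>_pos[of x0]
      by (simp add: w_def) (smt (verit) mult_pos_pos)
  qed
  with t0 have "s < t0" "t0 \<le> t"
    by auto
  from that[OF \<open>0 < \<epsilon>\<close> this \<open>0 < w t0 x0\<close>[unfolded w_def] w_max[unfolded w_def]]
  show ?thesis .
qed

lemma comparison_principle:
  fixes q :: "real \<Rightarrow> real^'n::finite \<Rightarrow> 'n \<Rightarrow> 'n \<Rightarrow> real"
  assumes sol: "cauchy_sol \<alpha> q b c s f u" and "0 < \<alpha>"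
    and c_nonneg: "\<And>\<tau> y. s < \<tau> \<Longrightarrow> \<tau> \<le> t \<Longrightarrow> 0 \<le> c \<tau> y"
    and q_sym: "\<And>\<tau> y i j. s < \<tau> \<Longrightarrow> \<tau> \<le> t \<Longrightarrow> q \<tau> y i j = q \<tau> y j i"
    and q_psd: "\<And>\<tau> y. s < \<tau> \<Longrightarrow> \<tau> \<le> t \<Longrightarrow> psd_on UNIV (q \<tau> y)"
    and "C2 \<phi>" and \<phi>_nonneg: "\<And>y. 0 \<le> \<phi> y"
    and \<phi>_sup: "\<And>\<tau> y. s < \<tau> \<Longrightarrow> \<tau> \<le> t \<Longrightarrow> Aop q b c \<tau> \<phi> y \<le> M" and "0 \<le> M"
    and "C2 \<psi>" and \<psi>_pos: "\<And>y. 0 < \<psi> y" and \<psi>_coercive: "filterlim \<psi> at_top at_infinity"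
    and \<psi>_lyap: "\<And>\<tau> y. s < \<tau> \<Longrightarrow> \<tau> \<le> t \<Longrightarrow> Aop q b c \<tau> \<psi> y \<le> lam * \<psi> y"
    and f_le: "\<And>y. f y \<le> \<phi> y"
    and "s \<le> t"
  shows "u t x \<le> \<phi> x + M * (t - s)"
proof (rule ccontr)
  obtain ut ux uxx where
      u_cont: "continuous_on ({s..} \<times> UNIV) (\<lambda>(t, x). u t x)"
    and u_bdd: "\<And>T. bounded ((\<lambda>(t, x). u t x) ` ({s..T} \<times> UNIV))"
    and u_init: "\<And>y. u s y = f y"
    and dut: "\<And>\<tau> y. s < \<tau> \<Longrightarrow> ((\<lambda>\<tau>. u \<tau> y) has_real_derivative ut \<tau> y) (at \<tau>)"
    and dux: "\<And>\<tau> y i. s < \<tau> \<Longrightarrow> ((\<lambda>h. u \<tau> (y + h *\<^sub>R axis i 1)) has_real_derivative ux \<tau> y i) (at 0)"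
    and duxx: "\<And>\<tau> y i j. s < \<tau> \<Longrightarrow> ((\<lambda>h. ux \<tau> (y + h *\<^sub>R axis j 1) i) has_real_derivative uxx \<tau> y i j) (at 0)"
    and ux_cont: "\<And>\<tau> i. s < \<tau> \<Longrightarrow> continuous_on UNIV (\<lambda>y. ux \<tau> y i)"
    and uxx_cont: "\<And>\<tau> i j. s < \<tau> \<Longrightarrow> continuous_on UNIV (\<lambda>y. uxx \<tau> y i j)"
    and pde: "\<And>\<tau> y. s < \<tau> \<Longrightarrow> ut \<tau> y = (\<Sum>i\<in>UNIV. \<Sum>j\<in>UNIV. q \<tau> y i j * uxx \<tau> y i j)
                                 + (\<Sum>i\<in>UNIV. b \<tau> y i * ux \<tau> y i) - c \<tau> y * u \<tau> y"
    using cauchy_solE[OF sol \<open>0 < \<alpha>\<close>] by blast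
  (* The \<psi>-penalty keeps the maximum away from spatial infinity; its factor exp (k (\<tau> - s))
     with k > lam makes the time derivative beat the Lyapunov bound at that maximum. *)
  define k where "k = \<bar>lam\<bar> + 1"
  assume "\<not> u t x \<le> \<phi> x + M * (t - s)"
  then have exceeds: "\<phi> x + M * (t - s) < u t x"
    by simp
  have "{s..t} \<times> UNIV \<subseteq> {s..} \<times> (UNIV :: (real^'n) set)"
    by auto
  with u_cont have u_cont': "continuous_on ({s..t} \<times> UNIV) (\<lambda>(\<tau>, y). u \<tau> y)"
    by (rule continuous_on_subset)
  have init: "u s y \<le> \<phi> y" for y
    using u_init f_le by simp
  have "0 \<le> k"
    by (simp add: k_def)
  obtain \<epsilon> t0 x0 where "0 < \<epsilon>" "s < t0" "t0 \<le> t"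
    and w_pos: "0 < u t0 x0 - \<phi> x0 - M * (t0 - s) - \<epsilon> * exp (k * (t0 - s)) * \<psi> x0"
    and w_max: "\<And>\<tau> y. \<tau> \<in> {s..t} \<Longrightarrow> u \<tau> y - \<phi> y - M * (\<tau> - s) - \<epsilon> * exp (k * (\<tau> - s)) * \<psi> y
        \<le> u t0 x0 - \<phi> x0 - M * (t0 - s) - \<epsilon> * exp (k * (t0 - s)) * \<psi> x0"
    using penalized_positive_max[OF \<open>s \<le> t\<close> u_cont' u_bdd[of t] init C2D(1)[OF \<open>C2 \<phi>\<close>] \<phi>_nonneg
        \<open>0 \<le> M\<close> C2D(1)[OF \<open>C2 \<psi>\<close>] \<psi>_pos \<psi>_coercive \<open>0 \<le> k\<close> exceeds]
    by blast
  define a where "a = \<epsilon> * exp (k * (t0 - s))"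
  have "0 < a" using \<open>0 < \<epsilon>\<close> by (simp add: a_def)
  have "((\<lambda>\<tau>. u \<tau> x0 - \<phi> x0 - M * (\<tau> - s) - \<epsilon> * exp (k * (\<tau> - s)) * \<psi> x0)
      has_real_derivative ut t0 x0 - M - a * k * \<psi> x0) (at t0)"
    unfolding a_def by (rule derivative_eq_intros dut[OF \<open>s < t0\<close>] | simp)+
  then have time: "0 \<le> ut t0 x0 - M - a * k * \<psi> x0"
    by (rule DERIV_nonneg_at_left_max[OF _ \<open>s < t0\<close>]) (use w_max \<open>t0 \<le> t\<close> in auto)
  have "ut t0 x0 \<le> Aop q b c t0 \<phi> x0 + a * Aop q b c t0 \<psi> x0"
    unfolding pde[OF \<open>s < t0\<close>]
  proof (rule Aop_le_at_spatial_max[OF dux[OF \<open>s < t0\<close>] ux_cont[OF \<open>s < t0\<close>]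
        duxx[OF \<open>s < t0\<close>] uxx_cont[OF \<open>s < t0\<close>] \<open>C2 \<phi>\<close> \<open>C2 \<psi>\<close>])
    show "u t0 y - \<phi> y - a * \<psi> y \<le> u t0 x0 - \<phi> x0 - a * \<psi> x0" for y
      using w_max[of t0 y] \<open>s < t0\<close> \<open>t0 \<le> t\<close> by (simp add: a_def)
    have "0 \<le> u t0 x0 - \<phi> x0 - a * \<psi> x0"
      using w_pos \<open>0 \<le> M\<close> \<open>s < t0\<close> unfolding a_def by (smt (verit) mult_nonneg_nonneg)
    then show "0 \<le> c t0 x0 * (u t0 x0 - \<phi> x0 - a * \<psi> x0)"
      using c_nonneg[OF \<open>s < t0\<close> \<open>t0 \<le> t\<close>, of x0] by simp
  qed (use q_psd q_sym \<open>s < t0\<close> \<open>t0 \<le> t\<close> in auto)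
  also have "\<dots> \<le> M + a * (lam * \<psi> x0)"
    using \<phi>_sup[OF \<open>s < t0\<close> \<open>t0 \<le> t\<close>] \<psi>_lyap[OF \<open>s < t0\<close> \<open>t0 \<le> t\<close>] \<open>0 < a\<close>
    by (intro add_mono mult_left_mono) auto
  also have "\<dots> < M + a * k * \<psi> x0"
    using \<open>0 < a\<close> \<psi>_pos[of x0] by (simp add: k_def)
  finally show False
    using time by simp
qed

section \<open>The evolution operator applied to the Lyapunov function\<close>

lemma nn_integral_le_of_truncations:
  fixes g \<phi> :: "'a \<Rightarrow> real"
  assumes g_nonneg: "\<And>y. 0 \<le> g y" and \<phi>_nonneg: "\<And>y. 0 \<le> \<phi> y"
    and integrable: "\<And>n::nat. integrable M (\<lambda>y. g y * min (\<phi> y) n)"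
    and bound: "\<And>n::nat. (\<integral>y. g y * min (\<phi> y) n \<partial>M) \<le> K"
  shows "(\<integral>\<^sup>+ y. ennreal (g y * \<phi> y) \<partial>M) \<le> ennreal K"
proof -
  have "(SUP n::nat. ennreal (g y * min (\<phi> y) n)) = ennreal (g y * \<phi> y)" for y
  proof (rule antisym)
    show "(SUP n::nat. ennreal (g y * min (\<phi> y) n)) \<le> ennreal (g y * \<phi> y)"
      using g_nonneg[of y] by (intro SUP_least ennreal_leI mult_left_mono) auto
    obtain n :: nat where "\<phi> y \<le> n"
      using real_arch_simple by blast
    then show "ennreal (g y * \<phi> y) \<le> (SUP n::nat. ennreal (g y * min (\<phi> y) n))"
      by (intro SUP_upper2[of n]) auto
  qed
  then have "(\<integral>\<^sup>+ y. ennreal (g y * \<phi> y) \<partial>M) = (\<integral>\<^sup>+ y. (SUP n::nat. ennreal (g y * min (\<phi> y) n)) \<partial>M)"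
    by simp
  also have "\<dots> = (SUP n::nat. \<integral>\<^sup>+ y. ennreal (g y * min (\<phi> y) n) \<partial>M)"
  proof (rule nn_integral_monotone_convergence_SUP)
    show "incseq (\<lambda>n y. ennreal (g y * min (\<phi> y) (real n)))"
      using g_nonneg by (intro incseq_SucI le_funI ennreal_leI mult_left_mono) auto
    show "(\<lambda>y. ennreal (g y * min (\<phi> y) (real n))) \<in> borel_measurable M" for n
      using borel_measurable_integrable[OF integrable[of n]] by measurable
  qed
  also have "\<dots> = (SUP n::nat. ennreal (\<integral>y. g y * min (\<phi> y) n \<partial>M))"
    using integrable g_nonneg \<phi>_nonneg
    by (intro SUP_cong refl nn_integral_eq_integral AE_I2) auto
  also have "\<dots> \<le> ennreal K"
    by (intro SUP_least ennreal_leI bound)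
  finally show ?thesis .
qed

lemma Gnn_le_linear_growth:
  fixes q :: "real \<Rightarrow> real^'n::finite \<Rightarrow> 'n \<Rightarrow> 'n \<Rightarrow> real"
  assumes "s \<le> t"
    and green_pos: "\<And>t x y. s < t \<Longrightarrow> 0 < g t s x y"
    and green: "\<And>f. continuous_on UNIV f \<Longrightarrow> bounded (range f) \<Longrightarrow>
                 (\<forall>t x. s < t \<longrightarrow> integrable lborel (\<lambda>y. g t s x y * f y))
               \<and> cauchy_sol \<alpha> q b c s f (\<lambda>t x. if t = s then f x else \<integral>y. g t s x y * f y \<partial>lborel)"
    and "0 < \<alpha>"
    and c_nonneg: "\<And>\<tau> y. s < \<tau> \<Longrightarrow> \<tau> \<le> t \<Longrightarrow> 0 \<le> c \<tau> y"
    and q_sym: "\<And>\<tau> y i j. s < \<tau> \<Longrightarrow> \<tau> \<le> t \<Longrightarrow> q \<tau> y i j = q \<tau> y j i"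
    and q_psd: "\<And>\<tau> y. s < \<tau> \<Longrightarrow> \<tau> \<le> t \<Longrightarrow> psd_on UNIV (q \<tau> y)"
    and "C2 \<phi>" and \<phi>_nonneg: "\<And>y. 0 \<le> \<phi> y"
    and \<phi>_sup: "\<And>\<tau> y. s < \<tau> \<Longrightarrow> \<tau> \<le> t \<Longrightarrow> Aop q b c \<tau> \<phi> y \<le> M" and "0 \<le> M"
    and "C2 \<psi>" and \<psi>_pos: "\<And>y. 0 < \<psi> y" and \<psi>_coercive: "filterlim \<psi> at_top at_infinity"
    and \<psi>_lyap: "\<And>\<tau> y. s < \<tau> \<Longrightarrow> \<tau> \<le> t \<Longrightarrow> Aop q b c \<tau> \<psi> y \<le> lam * \<psi> y"
  shows "Gnn g t s \<phi> x \<le> ennreal (\<phi> x + M * (t - s))"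
proof (cases "s = t")
  case True
  then show ?thesis by (simp add: Gnn_def)
next
  case False
  then have "s < t" using \<open>s \<le> t\<close> by simp
  (* The Green representation only covers bounded data, so \<phi> is truncated at height n. *)
  have "integrable lborel (\<lambda>y. g t s x y * min (\<phi> y) n)
    \<and> (\<integral>y. g t s x y * min (\<phi> y) n \<partial>lborel) \<le> \<phi> x + M * (t - s)" for n :: nat
  proof -
    have "continuous_on UNIV (\<lambda>y. min (\<phi> y) n)"
      using C2D(1)[OF \<open>C2 \<phi>\<close>] by (intro continuous_intros)
    moreover have "bounded (range (\<lambda>y. min (\<phi> y) n))"
      unfolding bounded_iff using \<phi>_nonneg by (intro exI[of _ "real n"]) auto
    ultimately have "(\<forall>t x. s < t \<longrightarrow> integrable lborel (\<lambda>y. g t s x y * min (\<phi> y) n))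
      \<and> cauchy_sol \<alpha> q b c s (\<lambda>y. min (\<phi> y) n)
          (\<lambda>t x. if t = s then min (\<phi> x) n else \<integral>y. g t s x y * min (\<phi> y) n \<partial>lborel)"
      by (rule green)
    moreover note comparison_principle[OF conjunct2[OF this] \<open>0 < \<alpha>\<close> c_nonneg q_sym q_psd
        \<open>C2 \<phi>\<close> \<phi>_nonneg \<phi>_sup \<open>0 \<le> M\<close> \<open>C2 \<psi>\<close> \<psi>_pos \<psi>_coercive \<psi>_lyap _ \<open>s \<le> t\<close>, of x]
    ultimately show ?thesis
      using \<open>s < t\<close> by simp
  qed
  then have "(\<integral>\<^sup>+ y. ennreal (g t s x y * \<phi> y) \<partial>lborel) \<le> ennreal (\<phi> x + M * (t - s))"
    using green_pos[OF \<open>s < t\<close>, of x] \<phi>_nonneg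
    by (intro nn_integral_le_of_truncations) (auto intro: less_imp_le)
  then show ?thesis
    using False by (simp add: Gnn_def)
qed

lemma bounded_on_ball_of_linear_growth:
  fixes F :: "real \<Rightarrow> real \<Rightarrow> 'a::{real_normed_vector, heine_borel} \<Rightarrow> ennreal"
  assumes "continuous_on UNIV \<phi>" "bounded J" "0 \<le> M"
    and growth: "\<And>t s x. t \<in> J \<Longrightarrow> s \<in> J \<Longrightarrow> s \<le> t \<Longrightarrow> F t s x \<le> ennreal (\<phi> x + M * (t - s))"
  shows "\<exists>K::real. \<forall>t\<in>J. \<forall>s\<in>J. \<forall>x\<in>ball 0 \<rho>. s \<le> t \<longrightarrow> F t s x \<le> ennreal K"
proof -
  have "bounded (\<phi> ` cball 0 \<rho>)"
    using assms(1) by (intro compact_imp_bounded compact_continuous_image) (auto intro: continuous_on_subset)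
  then obtain P where P: "\<forall>x\<in>cball 0 \<rho>. \<bar>\<phi> x\<bar> \<le> P"
    unfolding bounded_iff by auto
  obtain r where r: "\<And>t. t \<in> J \<Longrightarrow> \<bar>t\<bar> \<le> r"
    using \<open>bounded J\<close> unfolding bounded_iff by auto
  have "F t s x \<le> ennreal (P + M * (2 * r))" if "t \<in> J" "s \<in> J" "x \<in> ball 0 \<rho>" "s \<le> t" for t s x
  proof -
    have "\<phi> x + M * (t - s) \<le> P + M * (2 * r)"
      using P[rule_format, of x] r[OF that(1)] r[OF that(2)] that(3) \<open>0 \<le> M\<close>
      by (intro add_mono mult_left_mono) auto
    then show ?thesis
      using growth[OF that(1,2,4), of x] by (meson ennreal_leI order_trans)
  qed
  then show ?thesis by blast
qed

theorem proposition4p7: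
  fixes \<alpha> :: real and I :: "real set"
    and q :: "real \<Rightarrow> real^'n::finite \<Rightarrow> 'n \<Rightarrow> 'n \<Rightarrow> real"
    and b :: "real \<Rightarrow> real^'n \<Rightarrow> 'n \<Rightarrow> real"
    and c :: "real \<Rightarrow> real^'n \<Rightarrow> real"
    and g :: "real \<Rightarrow> real \<Rightarrow> real^'n \<Rightarrow> real^'n \<Rightarrow> real"
    and \<phi> :: "real set \<Rightarrow> real^'n \<Rightarrow> real"
    and M :: "real set \<Rightarrow> real"
  assumes alpha: "0 < \<alpha>" "\<alpha> < 1"
    and I: "I = UNIV \<or> (\<exists>a. I = {a..} \<or> I = {a<..})"
    and q_reg: "\<And>i j. holder_loc \<alpha> (I \<times> UNIV) (\<lambda>t x. q t x i j)"
    and b_reg: "\<And>i. holder_loc \<alpha> (I \<times> UNIV) (\<lambda>t x. b t x i)"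
    and c_reg: "holder_loc \<alpha> (I \<times> UNIV) c"
    and c_inf: "\<exists>c0. \<forall>t\<in>I. \<forall>x. c t x \<ge> c0"
    and q_sym: "\<And>t x i j. t \<in> I \<Longrightarrow> q t x i j = q t x j i"
    and elliptic: "\<exists>\<eta>. (\<forall>t\<in>I. \<forall>x \<xi>. (\<Sum>i\<in>UNIV. \<Sum>j\<in>UNIV. q t x i j * \<xi>$i * \<xi>$j) \<ge> \<eta> t x * (norm \<xi>)\<^sup>2)
                       \<and> (\<exists>\<eta>0>0. \<forall>t\<in>I. \<forall>x. \<eta> t x \<ge> \<eta>0)"
    and lyap: "\<And>J. bdd_interval J \<Longrightarrow> J \<subseteq> I \<Longrightarrow>
                 \<exists>\<psi> lam. (\<forall>x. \<psi> x > 0) \<and> C2 \<psi> \<and> filterlim \<psi> at_top at_infinity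
                       \<and> (\<forall>t\<in>J. \<forall>x. Aop q b c t \<psi> x \<le> lam * \<psi> x)"
    and green_pos: "\<And>t s x y. s \<in> I \<Longrightarrow> s < t \<Longrightarrow> g t s x y > 0"
    and green: "\<And>s f. s \<in> I \<Longrightarrow> continuous_on UNIV f \<Longrightarrow> bounded (range f) \<Longrightarrow>
                 (\<forall>t x. s < t \<longrightarrow> integrable lborel (\<lambda>y. g t s x y * f y))
               \<and> cauchy_sol \<alpha> q b c s f
                   (\<lambda>t x. if t = s then f x else \<integral>y. g t s x y * f y \<partial>lborel)"
    and c_nonneg: "\<And>t x. t \<in> I \<Longrightarrow> c t x \<ge> 0"
    and phi: "\<And>J. bdd_interval J \<Longrightarrow> J \<subseteq> I \<Longrightarrow>
                 (\<forall>x. \<phi> J x > 0) \<and> C2 (\<phi> J) \<and> filterlim (\<phi> J) at_top at_infinity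
               \<and> M J > 0 \<and> (\<forall>t\<in>J. \<forall>x. Aop q b c t (\<phi> J) x \<le> M J)"
  shows "\<forall>J \<rho>. bdd_interval J \<and> J \<subseteq> I \<and> \<rho> > 0 \<longrightarrow>
           (\<exists>K::real. \<forall>t\<in>J. \<forall>s\<in>J. \<forall>x\<in>ball 0 \<rho>. s \<le> t \<longrightarrow> Gnn g t s (\<phi> J) x \<le> ennreal K)"
proof (intro allI impI)
  fix J :: "real set" and \<rho> :: real
  assume "bdd_interval J \<and> J \<subseteq> I \<and> 0 < \<rho>"
  then have J: "bdd_interval J" "J \<subseteq> I" by auto
  then have in_J: "\<tau> \<in> J" if "s \<in> J" "t \<in> J" "s < \<tau>" "\<tau> \<le> t" for s t \<tau>
    using that unfolding bdd_interval_def is_interval_1 by (meson less_imp_le)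
  from phi[OF J] have \<phi>: "\<And>y. 0 < \<phi> J y" "C2 (\<phi> J)" "0 < M J" "\<And>t y. t \<in> J \<Longrightarrow> Aop q b c t (\<phi> J) y \<le> M J"
    by auto
  from lyap[OF J] obtain \<psi> lam where \<psi>: "\<And>y. 0 < \<psi> y" "C2 \<psi>" "filterlim \<psi> at_top at_infinity"
    "\<And>t y. t \<in> J \<Longrightarrow> Aop q b c t \<psi> y \<le> lam * \<psi> y"
    by blast
  from elliptic obtain \<eta> \<eta>0 where "0 < \<eta>0" and "\<And>t y. t \<in> I \<Longrightarrow> \<eta>0 \<le> \<eta> t y"
    and "\<And>t y \<xi>. t \<in> I \<Longrightarrow> \<eta> t y * (norm \<xi>)\<^sup>2 \<le> (\<Sum>i\<in>UNIV. \<Sum>j\<in>UNIV. q t y i j * \<xi>$i * \<xi>$j)"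
    by blast
  then have q_psd: "psd_on UNIV (q t y)" if "t \<in> I" for t y
    using that by (intro psd_on_UNIV_of_elliptic[of "\<eta> t y"]) (auto intro: order_trans[of 0 \<eta>0] less_imp_le)
  have growth: "Gnn g t s (\<phi> J) x \<le> ennreal (\<phi> J x + M J * (t - s))" if "t \<in> J" "s \<in> J" "s \<le> t" for t s x
  proof -
    have "s \<in> I" using that J by auto
    have in_I: "\<tau> \<in> I" if "s < \<tau>" "\<tau> \<le> t" for \<tau>
      using in_J[OF \<open>s \<in> J\<close> \<open>t \<in> J\<close> that] J by auto
    show ?thesis
      using \<phi> \<psi> in_I in_J[OF \<open>s \<in> J\<close> \<open>t \<in> J\<close>]
      by (intro Gnn_le_linear_growth[where g=g and s=s and t=t and \<alpha>=\<alpha> and q=q and b=b and c=c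
            and lam=lam, OF \<open>s \<le> t\<close> green_pos[OF \<open>s \<in> I\<close>] green[OF \<open>s \<in> I\<close>] alpha(1)])
        (auto intro: c_nonneg q_sym q_psd less_imp_le)
  qed
  have "bounded J"
    using J by (simp add: bdd_interval_def)
  from bounded_on_ball_of_linear_growth[OF C2D(1)[OF \<phi>(2)] this less_imp_le[OF \<phi>(3)] growth]
  show "\<exists>K::real. \<forall>t\<in>J. \<forall>s\<in>J. \<forall>x\<in>ball 0 \<rho>. s \<le> t \<longrightarrow> Gnn g t s (\<phi> J) x \<le> ennreal K" .
qed

end
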